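(* Let $G$ be a finite simple graph with ${\rm diam}(G)=k$, and let $e$ be an edge of $G$ such that ${\rm diam}(G-e) > k$. Let $u, v$ be two vertices of $G$ with $d_{G-e}(u,v)>k$. If there exists a $\chi_\rho(G)$-packing coloring $c$ of $G$ such that $c(v)>c(u) \geq k$, then $\chi_\rho(G-e) < \chi_\rho(G)$.
   Context: A $k$-packing coloring of a graph $G$ is a map $c:V(G)\to\{1,\ldots,k\}$ such that two distinct vertices $u,v$ with $c(u)=c(v)=i$ satisfy $d_G(u,v)>i$ (distance between vertices in different components is infinite). The packing chromatic number $\chi_\rho(G)$ is the smallest $k$ for which $G$ admits a $k$-packing coloring. ${\rm diam}$ denotes the diameter (maximum distance between two vertices, infinite if disconnected); $G-e$ is $G$ with the edge $e$ deleted. *)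

theory Defs
  imports Main "HOL-Library.Extended_Nat"
begin

definition simple_graph :: "'a set \<Rightarrow> 'a set set \<Rightarrow> bool" where
  "simple_graph V E \<longleftrightarrow> finite V \<and> (\<forall>e\<in>E. e \<subseteq> V \<and> card e = 2)"

definition walk :: "'a set \<Rightarrow> 'a set set \<Rightarrow> 'a \<Rightarrow> 'a \<Rightarrow> nat \<Rightarrow> bool" where
  "walk V E u v n \<longleftrightarrow> (\<exists>p. p 0 = u \<and> p n = v \<and> (\<forall>i\<le>n. p i \<in> V) \<and>
                               (\<forall>i<n. {p i, p (Suc i)} \<in> E))"

definition gdist :: "'a set \<Rightarrow> 'a set set \<Rightarrow> 'a \<Rightarrow> 'a \<Rightarrow> enat" where
  "gdist V E u v = (if \<exists>n. walk V E u v n then enat (LEAST n. walk V E u v n) else \<infinity>)"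

definition diam :: "'a set \<Rightarrow> 'a set set \<Rightarrow> enat" where
  "diam V E = (SUP u\<in>V. SUP v\<in>V. gdist V E u v)"

definition packing_coloring :: "'a set \<Rightarrow> 'a set set \<Rightarrow> nat \<Rightarrow> ('a \<Rightarrow> nat) \<Rightarrow> bool" where
  "packing_coloring V E k c \<longleftrightarrow>
     (\<forall>x\<in>V. c x \<in> {1..k}) \<and>
     (\<forall>x\<in>V. \<forall>y\<in>V. x \<noteq> y \<and> c x = c y \<longrightarrow> gdist V E x y > enat (c x))"

definition packing_chromatic :: "'a set \<Rightarrow> 'a set set \<Rightarrow> nat" where
  "packing_chromatic V E = (LEAST k. \<exists>c. packing_coloring V E k c)"

end

theory Submission
  imports Defs
begin

text \<open>
  Two vertices sharing a colour \<open>i \<ge> k = diam G\<close> would have to be at distance \<open>> i \<ge> k\<close>,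
  so every colour \<open>\<ge> k\<close> is used at most once. Now give both \<open>u\<close> and \<open>v\<close> the colour \<open>k\<close>,
  which is legal in \<open>G - e\<close> because \<open>d\<^sub>G\<^sub>-\<^sub>e(u, v) > k\<close>, and give the former owner of \<open>k\<close>
  (if any) the freed colour \<open>c(u)\<close>. Deleting an edge only increases distances, so this is a
  packing colouring of \<open>G - e\<close> with the same number of colours that no longer uses \<open>c(v)\<close>;
  lowering every colour above \<open>c(v)\<close> by one saves a colour.
\<close>

lemma walk_subset_edges: "walk V E' x y n \<Longrightarrow> E' \<subseteq> E \<Longrightarrow> walk V E x y n"
  unfolding walk_def by blast

lemma gdist_antimono_edges:
  assumes "E' \<subseteq> E"
  shows "gdist V E x y \<le> gdist V E' x y"
proof (cases "\<exists>n. walk V E' x y n")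
  case True
  have "walk V E x y (LEAST n. walk V E' x y n)"
    using walk_subset_edges[OF LeastI_ex[OF True] assms] .
  then have "\<exists>n. walk V E x y n" "(LEAST n. walk V E x y n) \<le> (LEAST n. walk V E' x y n)"
    by (blast, rule Least_le)
  with True show ?thesis unfolding gdist_def by simp
qed (simp add: gdist_def)

lemma walk_rev: "walk V E x y n \<Longrightarrow> walk V E y x n"
proof -
  assume "walk V E x y n"
  then obtain p where p: "p 0 = x" "p n = y" "\<forall>i\<le>n. p i \<in> V" "\<forall>i<n. {p i, p (Suc i)} \<in> E"
    unfolding walk_def by blast
  have "{p (n - i), p (n - Suc i)} \<in> E" if "i < n" for i
  proof -
    have "{p (n - Suc i), p (Suc (n - Suc i))} \<in> E" using p(4) that by simp
    moreover have "Suc (n - Suc i) = n - i" using that by simp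
    ultimately show ?thesis by (simp add: insert_commute)
  qed
  with p show ?thesis
    unfolding walk_def by (intro exI[of _ "\<lambda>i. p (n - i)"]) simp
qed

lemma gdist_commute: "gdist V E x y = gdist V E y x"
proof -
  have "walk V E x y = walk V E y x" by (rule ext) (meson walk_rev)
  then show ?thesis unfolding gdist_def by simp
qed

lemma gdist_ge_one: "x \<noteq> y \<Longrightarrow> 1 \<le> gdist V E x y"
proof (cases "\<exists>n. walk V E x y n")
  case True
  assume "x \<noteq> y"
  then have "\<not> walk V E x y 0" unfolding walk_def by auto
  then have "(LEAST n. walk V E x y n) \<noteq> 0" using LeastI_ex[OF True] by metis
  with True show ?thesis unfolding gdist_def by (simp add: one_enat_def)
qed (simp add: gdist_def)

lemma gdist_le_diam: "x \<in> V \<Longrightarrow> y \<in> V \<Longrightarrow> gdist V E x y \<le> diam V E"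
  unfolding diam_def by (meson SUP_upper order_trans)

lemma diam_ge_one_if_edge:
  assumes "simple_graph V E" "e \<in> E"
  shows "1 \<le> diam V E"
proof -
  obtain x y where "e = {x, y}" "x \<noteq> y"
    using assms unfolding simple_graph_def by (meson card_2_iff)
  moreover from this have "x \<in> V" "y \<in> V"
    using assms unfolding simple_graph_def by auto
  ultimately show ?thesis using gdist_ge_one gdist_le_diam order_trans by metis
qed

lemma packing_coloring_large_colour_unique:
  assumes "packing_coloring V E m c" "diam V E \<le> enat k"
    and "x \<in> V" "y \<in> V" "c x = c y" "k \<le> c x"
  shows "x = y"
proof (rule ccontr)
  assume "x \<noteq> y"
  with assms have "enat (c x) < gdist V E x y" unfolding packing_coloring_def by blast
  also have "\<dots> \<le> enat k" using gdist_le_diam[OF assms(3,4)] assms(2) by (rule order_trans)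
  finally show False using assms(6) by simp
qed

lemma packing_coloring_skip_unused_colour:
  assumes c: "packing_coloring V E m c" and b: "b \<in> {1..m}" "b \<notin> c ` V"
  shows "packing_coloring V E (m - 1) (\<lambda>x. if b < c x then c x - 1 else c x)"
    (is "packing_coloring V E (m - 1) ?d")
  unfolding packing_coloring_def
proof (intro conjI ballI impI)
  fix x assume "x \<in> V"
  with c b(2) have "c x \<in> {1..m}" "c x \<noteq> b"
    unfolding packing_coloring_def by auto
  with b(1) show "?d x \<in> {1..m - 1}" by auto
next
  fix x y assume xy: "x \<in> V" "y \<in> V" "x \<noteq> y \<and> ?d x = ?d y"
  have "c x \<noteq> b" "c y \<noteq> b" using xy(1,2) b(2) by auto
  with xy have "c x = c y" by (auto split: if_splits)
  with c xy have "enat (c x) < gdist V E x y" unfolding packing_coloring_def by blast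
  moreover have "enat (?d x) \<le> enat (c x)" by simp
  ultimately show "enat (?d x) < gdist V E x y" by (rule le_less_trans[rotated])
qed

lemma packing_chromatic_less_if_unused_colour:
  assumes "packing_coloring V E m c" "b \<in> {1..m}" "b \<notin> c ` V"
  shows "packing_chromatic V E < m"
proof -
  have "packing_chromatic V E \<le> m - 1"
    unfolding packing_chromatic_def
    using packing_coloring_skip_unused_colour[of V E m c b] assms by (intro Least_le) auto
  with assms(2) show ?thesis by (cases m) auto
qed

lemma packing_coloring_recolour_pair:
  assumes c: "packing_coloring V E m c" and "E' \<subseteq> E"
    and unique: "\<And>x y. x \<in> V \<Longrightarrow> y \<in> V \<Longrightarrow> c x = c y \<Longrightarrow> k \<le> c x \<Longrightarrow> x = y"
    and uv: "u \<in> V" "v \<in> V" "enat k < gdist V E' u v"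
    and k: "1 \<le> k" "k \<le> c u" "c u < c v"
  obtains c' where "packing_coloring V E' m c'" "c v \<notin> c' ` V"
proof -
  define c' where "c' x = (if x = u \<or> x = v then k else if c x = k then c u else c x)" for x
  have range_c: "c x \<in> {1..m}" if "x \<in> V" for x
    using c that unfolding packing_coloring_def by blast
  have misses_cv: "c' x \<noteq> c v" if "x \<in> V" for x
    using unique[OF that uv(2)] k unfolding c'_def by auto
  have low: "c' x = c x" if "c' x < k" for x
    using that k unfolding c'_def by (auto split: if_splits)
  have other_colour: "c x \<noteq> c u" if "x \<in> V" "x \<notin> {u, v}" for x
  proof
    assume "c x = c u"
    with k(2) unique[OF that(1) uv(1)] have "x = u" by metis
    with that(2) show False by blast
  qed
  have other_not_k: "c' x \<noteq> k" if "x \<in> V" "x \<notin> {u, v}" for x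
    using other_colour[OF that] that(2) unfolding c'_def by auto
  have other_high: "k \<le> c x" if "x \<notin> {u, v}" "k \<le> c' x" for x
    using that unfolding c'_def by (auto split: if_splits)
  have other_same_colour: "c x = c y"
    if "x \<in> V" "y \<in> V" "x \<notin> {u, v}" "y \<notin> {u, v}" "c' x = c' y" for x y
    using that(5) other_colour[OF that(1,3)] other_colour[OF that(2,4)] that(3,4)
    unfolding c'_def by (auto split: if_splits)
  have high_in_pair: "x \<in> {u, v}"
    if "x \<in> V" "y \<in> V" "x \<noteq> y" "c' x = c' y" "k \<le> c' x" for x y
  proof (rule ccontr)
    assume x: "x \<notin> {u, v}"
    have "y \<notin> {u, v}" using other_not_k[OF that(1) x] that(4) unfolding c'_def by auto
    with that x have "c x = c y" "k \<le> c x" using other_same_colour other_high by blast+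
    with unique[OF that(1,2)] that(3) show False by blast
  qed
  have "packing_coloring V E' m c'"
    unfolding packing_coloring_def
  proof (intro conjI ballI impI)
    fix x assume "x \<in> V"
    with k range_c[of x] range_c[OF uv(1)] show "c' x \<in> {1..m}" unfolding c'_def by auto
  next
    fix x y assume "x \<in> V" "y \<in> V" "x \<noteq> y \<and> c' x = c' y"
    then have x: "x \<in> V" and y: "y \<in> V" and xy: "x \<noteq> y" "c' x = c' y" by blast+
    show "enat (c' x) < gdist V E' x y"
    proof (cases "c' x < k")
      case True
      with xy(2) low have "c' x = c x" "c' y = c y" by metis+
      with c x y xy have "enat (c' x) < gdist V E x y" unfolding packing_coloring_def by metis
      then show ?thesis using gdist_antimono_edges[OF \<open>E' \<subseteq> E\<close>, of V x y]
        by (rule less_le_trans)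
    next
      case False
      then have "x \<in> {u, v}" "y \<in> {u, v}"
        using high_in_pair[OF x y xy] high_in_pair[OF y x] xy by auto
      with xy(1) have "c' x = k" "x = u \<and> y = v \<or> x = v \<and> y = u"
        unfolding c'_def by auto
      with uv(3) gdist_commute[of V E' u v] show ?thesis by auto
    qed
  qed
  moreover have "c v \<notin> c' ` V" using misses_cv by force
  ultimately show ?thesis by (rule that)
qed

theorem lemma2p3:
  fixes V :: "'a set" and E :: "'a set set" and k :: nat and e :: "'a set"
    and u v :: 'a and c :: "'a \<Rightarrow> nat"
  assumes "simple_graph V E"
    and "diam V E = enat k"
    and "e \<in> E"
    and "diam V (E - {e}) > enat k"
    and "u \<in> V" and "v \<in> V"
    and "gdist V (E - {e}) u v > enat k"
    and "packing_coloring V E (packing_chromatic V E) c"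
    and "c v > c u" and "c u \<ge> k"
  shows "packing_chromatic V (E - {e}) < packing_chromatic V E"
proof -
  have "1 \<le> k" using diam_ge_one_if_edge[OF assms(1,3)] assms(2) by (simp add: one_enat_def)
  moreover have "\<And>x y. x \<in> V \<Longrightarrow> y \<in> V \<Longrightarrow> c x = c y \<Longrightarrow> k \<le> c x \<Longrightarrow> x = y"
    using packing_coloring_large_colour_unique assms(2,8) by (metis order_refl)
  ultimately obtain c' where c': "packing_coloring V (E - {e}) (packing_chromatic V E) c'"
      "c v \<notin> c' ` V"
    using packing_coloring_recolour_pair[OF assms(8) _ _ assms(5-7)] assms(9,10) by blast
  have "c v \<in> {1..packing_chromatic V E}"
    using assms(6,8) unfolding packing_coloring_def by blast
  then show ?thesis using packing_chromatic_less_if_unused_colour c' by blast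
qed

end
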